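(* Let $K$ be a field with an absolute value $v$, and let $\mathbb{C}_v$ denote the completion of an algebraic closure of $K$. Let $\phi(z)\in K[z]$ be a polynomial of degree $d\geq 2$, and let $\hat{\lambda}_{v,\phi}$ be the associated local canonical height. Write $\phi(z)=a_d z^d+\cdots+a_1 z+a_0=a_d(z-\alpha_1)\cdots(z-\alpha_d)$ with $a_i\in K$, $a_d\neq 0$, and $\alpha_i\in\mathbb{C}_v$. Let $A=\max\{|\alpha_i|_v : i=1,\ldots,d\}$ and $B=|a_d|_v^{-1/d}$, and define real constants $c_v,C_v\geq 1$ by $$c_v=\max\{1,A,B\}\quad\text{and}\quad C_v=\max\{1,|a_0|_v,|a_1|_v,\ldots,|a_d|_v\}$$ if $v$ is non-archimedean, or $$c_v=\max\{1,A+B\}\quad\text{and}\quad C_v=\max\{1,|a_0|_v+|a_1|_v+\cdots+|a_d|_v\}$$ if $v$ is archimedean. Then for all $x\in\mathbb{C}_v$, $$\frac{-d\log c_v}{d-1}\leq \hat{\lambda}_{v,\phi}(x)-\lambda_v(x)\leq \frac{\log C_v}{d-1}.$$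
   Context: The standard local height is $\lambda_v:\mathbb{C}_v\to[0,\infty)$, $\lambda_v(x)=\log\max\{1,|x|_v\}$. For a polynomial $\phi\in K[z]$ of degree $d\geq 2$, the local canonical height is $\hat{\lambda}_{v,\phi}(x)=\lim_{n\to\infty}d^{-n}\lambda_v(\phi^n(x))$ for $x\in\mathbb{C}_v$ (this limit exists), where $\phi^n$ denotes the $n$-th iterate of $\phi$ under composition. *)

theory Defs
  imports "HOL-Computational_Algebra.Polynomial" Complex_Main
begin

definition is_absolute_value :: "('a::field \<Rightarrow> real) \<Rightarrow> bool" where
  "is_absolute_value av \<longleftrightarrow>
     (\<forall>x. av x \<ge> 0) \<and> (\<forall>x. av x = 0 \<longleftrightarrow> x = 0) \<and>
     (\<forall>x y. av (x * y) = av x * av y) \<and>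
     (\<forall>x y. av (x + y) \<le> av x + av y)"

definition non_archimedean :: "('a::field \<Rightarrow> real) \<Rightarrow> bool" where
  "non_archimedean av \<longleftrightarrow> (\<forall>x y. av (x + y) \<le> max (av x) (av y))"

definition av_complete :: "('a::field \<Rightarrow> real) \<Rightarrow> bool" where
  "av_complete av \<longleftrightarrow>
     (\<forall>s :: nat \<Rightarrow> 'a.
        (\<forall>e>0. \<exists>N. \<forall>m\<ge>N. \<forall>n\<ge>N. av (s m - s n) < e) \<longrightarrow>
        (\<exists>L. \<forall>e>0. \<exists>N. \<forall>n\<ge>N. av (s n - L) < e))"

definition alg_closed :: "'a::field itself \<Rightarrow> bool" where
  "alg_closed _ \<longleftrightarrow> (\<forall>p :: 'a poly. degree p \<ge> 1 \<longrightarrow> (\<exists>z. poly p z = 0))"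

definition is_subfield :: "'a::field set \<Rightarrow> bool" where
  "is_subfield K \<longleftrightarrow> 0 \<in> K \<and> 1 \<in> K \<and>
     (\<forall>x\<in>K. \<forall>y\<in>K. x + y \<in> K \<and> x - y \<in> K \<and> x * y \<in> K) \<and>
     (\<forall>x\<in>K. inverse x \<in> K)"

definition local_height :: "('a::field \<Rightarrow> real) \<Rightarrow> 'a \<Rightarrow> real" where
  "local_height av x = ln (max 1 (av x))"

definition canonical_local_height :: "('a::field \<Rightarrow> real) \<Rightarrow> 'a poly \<Rightarrow> 'a \<Rightarrow> real" where
  "canonical_local_height av \<phi> x =
     lim (\<lambda>n. local_height av ((poly \<phi> ^^ n) x) / real (degree \<phi>) ^ n)"

text \<open>The constants \<open>c_v\<close> and \<open>C_v\<close>; \<open>\<alpha> 0, \<dots>, \<alpha> (d-1)\<close> are the roots.\<close>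
definition small_c :: "('a::field \<Rightarrow> real) \<Rightarrow> 'a poly \<Rightarrow> (nat \<Rightarrow> 'a) \<Rightarrow> real" where
  "small_c av \<phi> \<alpha> =
     (let d = degree \<phi>;
          A = Max ((\<lambda>i. av (\<alpha> i)) ` {..<d});
          B = av (lead_coeff \<phi>) powr (- 1 / real d)
      in if non_archimedean av then max 1 (max A B) else max 1 (A + B))"

definition big_C :: "('a::field \<Rightarrow> real) \<Rightarrow> 'a poly \<Rightarrow> real" where
  "big_C av \<phi> =
     (let d = degree \<phi>
      in if non_archimedean av then max 1 (Max ((\<lambda>i. av (coeff \<phi> i)) ` {..d}))
         else max 1 (\<Sum>i\<le>d. av (coeff \<phi> i)))"

end

theory Submission
  imports Defs
begin

text \<open>
  Write \<open>L n = \<lambda>\<^sub>v(\<phi>\<^sup>n(x))\<close>. Elementary estimates of \<open>|\<phi>(y)|\<^sub>v\<close> from above (expand into monomials)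
  and from below (factor into linear terms \<open>y - \<alpha>\<^sub>i\<close>, each comparable to \<open>y\<close> once \<open>|y|\<^sub>v > c\<^sub>v\<close>)
  show \<open>-d log c\<^sub>v \<le> L (n+1) - d L n \<le> log C\<^sub>v\<close>. Hence \<open>L n / d\<^sup>n\<close> telescopes into \<open>L 0\<close> plus a
  series dominated by the geometric series \<open>\<Sum> d\<^sup>-\<^sup>k\<^sup>-\<^sup>1 = 1/(d-1)\<close>, which gives both bounds.
\<close>

lemma is_absolute_value_nonneg: "is_absolute_value av \<Longrightarrow> av x \<ge> 0"
  and is_absolute_value_eq_0_iff: "is_absolute_value av \<Longrightarrow> av x = 0 \<longleftrightarrow> x = 0"
  and is_absolute_value_mult: "is_absolute_value av \<Longrightarrow> av (x * y) = av x * av y"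
  and is_absolute_value_triangle: "is_absolute_value av \<Longrightarrow> av (x + y) \<le> av x + av y"
  unfolding is_absolute_value_def by auto

lemma is_absolute_value_one:
  assumes "is_absolute_value av"
  shows "av 1 = 1"
proof -
  have "av 1 = av 1 * av 1" using is_absolute_value_mult[OF assms, of 1 1] by simp
  moreover have "av 1 \<noteq> 0" using is_absolute_value_eq_0_iff[OF assms, of 1] by simp
  ultimately show ?thesis by simp
qed

lemma is_absolute_value_prod:
  assumes "is_absolute_value av"
  shows "av (\<Prod>i\<in>S. f i) = (\<Prod>i\<in>S. av (f i))"
  by (induction S rule: infinite_finite_induct)
    (auto simp: is_absolute_value_one[OF assms] is_absolute_value_mult[OF assms])

lemma is_absolute_value_power:
  assumes "is_absolute_value av"
  shows "av (x ^ n) = av x ^ n"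
  using is_absolute_value_prod[OF assms, of "\<lambda>_. x" "{..<n}"] by simp

lemma is_absolute_value_sum_le:
  assumes "is_absolute_value av"
  shows "av (\<Sum>i\<in>S. f i) \<le> (\<Sum>i\<in>S. av (f i))"
proof (induction S rule: infinite_finite_induct)
  case (insert a F)
  then show ?case using is_absolute_value_triangle[OF assms, of "f a" "sum f F"] by simp
qed (use is_absolute_value_eq_0_iff[OF assms, of 0] in simp_all)

lemma non_archimedean_sum_le:
  assumes "is_absolute_value av" "non_archimedean av"
    and "\<And>i. i \<in> S \<Longrightarrow> av (f i) \<le> M" "M \<ge> 0"
  shows "av (\<Sum>i\<in>S. f i) \<le> M"
  using assms(3)
proof (induction S rule: infinite_finite_induct)
  case (insert a F)
  have "av (f a + sum f F) \<le> max (av (f a)) (av (sum f F))"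
    using assms(2) unfolding non_archimedean_def by blast
  moreover have "av (f a) \<le> M" "av (sum f F) \<le> M" using insert by simp_all
  ultimately show ?case using insert.hyps by simp
qed (use is_absolute_value_eq_0_iff[OF assms(1), of 0] assms(4) in simp_all)

lemma big_C_ge_1: "big_C av \<phi> \<ge> 1"
  by (simp add: big_C_def Let_def)

lemma av_poly_le_big_C:
  assumes av: "is_absolute_value av"
  shows "av (poly \<phi> y) \<le> big_C av \<phi> * max 1 (av y) ^ degree \<phi>"
proof -
  define d m C where "d = degree \<phi>" and "m = max 1 (av y)" and "C = big_C av \<phi>"
  have md: "m ^ d \<ge> 1" by (simp add: m_def)
  have monomial: "av (coeff \<phi> i * y ^ i) \<le> av (coeff \<phi> i) * m ^ d" if "i \<le> d" for i
  proof -
    have "av y ^ i \<le> m ^ i"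
      by (rule power_mono) (auto simp: m_def is_absolute_value_nonneg[OF av])
    also have "\<dots> \<le> m ^ d" using that by (intro power_increasing) (auto simp: m_def)
    finally show ?thesis
      by (simp add: is_absolute_value_mult[OF av] is_absolute_value_power[OF av]
          mult_left_mono is_absolute_value_nonneg[OF av])
  qed
  have "av (\<Sum>i\<le>d. coeff \<phi> i * y ^ i) \<le> C * m ^ d"
  proof (cases "non_archimedean av")
    case True
    have "av (coeff \<phi> i) \<le> C" if "i \<le> d" for i
      using that True by (auto simp: C_def big_C_def d_def intro!: Max_ge le_max_iff_disj[THEN iffD2])
    then have "av (coeff \<phi> i * y ^ i) \<le> C * m ^ d" if "i \<le> d" for i
      using monomial[OF that] that md by (meson mult_right_mono order_trans zero_le_one)
    then show ?thesis
      using md big_C_ge_1[of av \<phi>] unfolding C_def[symmetric]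
      by (intro non_archimedean_sum_le[OF av True]) auto
  next
    case False
    have "av (\<Sum>i\<le>d. coeff \<phi> i * y ^ i) \<le> (\<Sum>i\<le>d. av (coeff \<phi> i * y ^ i))"
      by (rule is_absolute_value_sum_le[OF av])
    also have "\<dots> \<le> (\<Sum>i\<le>d. av (coeff \<phi> i)) * m ^ d"
      by (auto simp: sum_distrib_right intro!: sum_mono monomial)
    also have "\<dots> \<le> C * m ^ d"
      using False md by (intro mult_right_mono) (auto simp: C_def big_C_def d_def)
    finally show ?thesis .
  qed
  then show ?thesis by (simp add: poly_altdef C_def m_def d_def)
qed

lemma local_height_poly_le:
  assumes "is_absolute_value av"
  shows "local_height av (poly \<phi> y) \<le> ln (big_C av \<phi>) + real (degree \<phi>) * local_height av y"
proof -
  define m C where "m = max 1 (av y)" and "C = big_C av \<phi>"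
  have C1: "C \<ge> 1" and m1: "m \<ge> 1" by (simp_all add: C_def big_C_ge_1 m_def)
  then have "1 \<le> C * m ^ degree \<phi>" using mult_mono[OF C1 one_le_power[OF m1]] by simp
  then have "max 1 (av (poly \<phi> y)) \<le> C * m ^ degree \<phi>"
    using av_poly_le_big_C[OF assms] by (simp add: C_def m_def)
  then have "ln (max 1 (av (poly \<phi> y))) \<le> ln (C * m ^ degree \<phi>)" by simp
  also have "\<dots> = ln C + real (degree \<phi>) * ln m" using C1 m1 by (simp add: ln_mult ln_realpow)
  finally show ?thesis by (simp add: local_height_def C_def m_def)
qed

lemma small_c_ge_1: "small_c av \<phi> \<alpha> \<ge> 1"
  by (simp add: small_c_def Let_def)

lemma lead_coeff_root_scale:
  assumes av: "is_absolute_value av" and deg: "degree \<phi> > 0"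
  defines "B \<equiv> av (lead_coeff \<phi>) powr (- 1 / real (degree \<phi>))"
  shows "B > 0" and "av (lead_coeff \<phi>) * B ^ degree \<phi> = 1"
proof -
  have "lead_coeff \<phi> \<noteq> 0" using deg by auto
  then have a0: "av (lead_coeff \<phi>) > 0"
    using is_absolute_value_nonneg[OF av] is_absolute_value_eq_0_iff[OF av] by (simp add: less_le)
  then show "B > 0" by (simp add: B_def)
  have "B ^ degree \<phi> = av (lead_coeff \<phi>) powr (- 1 / real (degree \<phi>) * real (degree \<phi>))"
    using a0 by (simp add: B_def powr_realpow[symmetric] powr_powr)
  also have "\<dots> = inverse (av (lead_coeff \<phi>))" using deg a0 by (simp add: powr_minus)
  finally show "av (lead_coeff \<phi>) * B ^ degree \<phi> = 1" using a0 by simp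
qed

text \<open>In both cases the factor \<open>B/c\<^sub>v \<le> 1\<close> absorbs the error \<open>|\<alpha>\<^sub>i|\<^sub>v \<le> A\<close>.\<close>
lemma av_sub_root_ge:
  assumes av: "is_absolute_value av" and i: "i < degree \<phi>"
    and y: "av y > small_c av \<phi> \<alpha>"
  shows "av y * av (lead_coeff \<phi>) powr (- 1 / real (degree \<phi>)) / small_c av \<phi> \<alpha>
           \<le> av (y - \<alpha> i)"
proof -
  define A B c where "A = Max ((\<lambda>i. av (\<alpha> i)) ` {..<degree \<phi>})"
    and "B = av (lead_coeff \<phi>) powr (- 1 / real (degree \<phi>))" and "c = small_c av \<phi> \<alpha>"
  have c: "c = (if non_archimedean av then max 1 (max A B) else max 1 (A + B))"
    by (simp add: c_def small_c_def Let_def A_def B_def)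
  have B0: "B > 0" using lead_coeff_root_scale(1)[OF av] i by (simp add: B_def)
  have Ai: "av (\<alpha> i) \<le> A" unfolding A_def using i by (intro Max_ge) auto
  have c1: "c \<ge> 1" by (simp add: c_def small_c_ge_1)
  have y0: "av y > 0" using y c1 by (simp add: c_def)
  have "av y * B / c \<le> av (y - \<alpha> i)"
  proof (cases "non_archimedean av")
    case True
    have "av y \<le> max (av (y - \<alpha> i)) (av (\<alpha> i))"
      using True unfolding non_archimedean_def by (metis diff_add_cancel)
    moreover have "av (\<alpha> i) < av y" using Ai y True by (simp add: c c_def[symmetric])
    moreover have "av y * B / c \<le> av y" using True y0 c1 by (simp add: c field_simps)
    ultimately show ?thesis by simp
  next
    case False
    then have cAB: "A + B \<le> c" by (simp add: c)
    have "av y \<le> av (y - \<alpha> i) + av (\<alpha> i)"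
      using is_absolute_value_triangle[OF av, of "y - \<alpha> i" "\<alpha> i"] by simp
    then have "(av y - A) * c \<le> av (y - \<alpha> i) * c" using Ai c1 by (intro mult_right_mono) auto
    moreover have "av y * B \<le> (av y - A) * c"
      using mult_left_mono[OF cAB, of "av y"] mult_right_mono[of c "av y" A] y y0 B0 Ai
        is_absolute_value_nonneg[OF av, of "\<alpha> i"]
      by (simp add: c_def algebra_simps)
    ultimately have "av y * B \<le> av (y - \<alpha> i) * c" by linarith
    then show ?thesis using c1 by (simp add: divide_le_eq)
  qed
  then show ?thesis by (simp add: B_def c_def)
qed

lemma av_poly_ge_small_c:
  assumes av: "is_absolute_value av" and deg: "degree \<phi> > 0"
    and roots: "\<forall>z. poly \<phi> z = lead_coeff \<phi> * (\<Prod>i<degree \<phi>. z - \<alpha> i)"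
    and y: "av y > small_c av \<phi> \<alpha>"
  shows "(av y / small_c av \<phi> \<alpha>) ^ degree \<phi> \<le> av (poly \<phi> y)"
proof -
  define a B c where "a = av (lead_coeff \<phi>)"
    and "B = av (lead_coeff \<phi>) powr (- 1 / real (degree \<phi>))" and "c = small_c av \<phi> \<alpha>"
  have aB: "a * B ^ degree \<phi> = 1" and B0: "B > 0"
    using lead_coeff_root_scale[OF av deg] by (simp_all add: a_def B_def)
  have "(av y / c) ^ degree \<phi> = a * (\<Prod>i<degree \<phi>. av y * B / c)"
    using aB by (simp add: power_mult_distrib power_divide algebra_simps)
  also have "\<dots> \<le> a * (\<Prod>i<degree \<phi>. av (y - \<alpha> i))"
    using av_sub_root_ge[OF av _ y] B0 y small_c_ge_1[of av \<phi> \<alpha>]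
    by (intro mult_left_mono prod_mono)
      (auto simp: a_def B_def c_def is_absolute_value_nonneg[OF av])
  also have "\<dots> = av (poly \<phi> y)"
    using roots by (simp add: a_def is_absolute_value_mult[OF av] is_absolute_value_prod[OF av])
  finally show ?thesis by (simp add: c_def)
qed

lemma local_height_poly_ge:
  assumes av: "is_absolute_value av" and deg: "degree \<phi> > 0"
    and roots: "\<forall>z. poly \<phi> z = lead_coeff \<phi> * (\<Prod>i<degree \<phi>. z - \<alpha> i)"
  shows "real (degree \<phi>) * local_height av y - real (degree \<phi>) * ln (small_c av \<phi> \<alpha>)
           \<le> local_height av (poly \<phi> y)"
proof -
  define c where "c = small_c av \<phi> \<alpha>"
  have c1: "c \<ge> 1" by (simp add: c_def small_c_ge_1)
  show ?thesis
  proof (cases "av y \<le> c")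
    case True
    then have "ln (max 1 (av y)) \<le> ln c" using c1 by simp
    then have "real (degree \<phi>) * ln (max 1 (av y)) \<le> real (degree \<phi>) * ln c"
      by (rule mult_left_mono) simp
    moreover have "0 \<le> ln (max 1 (av (poly \<phi> y)))" by simp
    ultimately show ?thesis unfolding local_height_def c_def by linarith
  next
    case False
    then have y0: "av y > 0" and y1: "av y > 1" using c1 by simp_all
    have "real (degree \<phi>) * ln (av y) - real (degree \<phi>) * ln c = ln ((av y / c) ^ degree \<phi>)"
      using y0 c1 by (simp add: ln_realpow ln_div algebra_simps)
    also have "\<dots> \<le> ln (max 1 (av (poly \<phi> y)))"
      using av_poly_ge_small_c[OF av deg roots, of y] False y0 c1 by (simp add: c_def)
    finally show ?thesis using y1 by (simp add: local_height_def c_def)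
  qed
qed

lemma sums_inverse_power_Suc:
  fixes D :: real
  assumes "D > 1"
  shows "(\<lambda>k. 1 / D ^ Suc k) sums (1 / (D - 1))"
proof -
  have "(\<lambda>k. 1 / D * (1 / D) ^ k) sums (1 / D * (1 / (1 - 1 / D)))"
    using assms by (intro sums_mult geometric_sums) auto
  moreover have "1 / D * (1 / (1 - 1 / D)) = 1 / (D - 1)" using assms by (simp add: field_simps)
  ultimately show ?thesis by (simp add: power_one_over)
qed

text \<open>\<open>L n / D\<^sup>n\<close> telescopes into \<open>L 0\<close> plus the series of \<open>(L (k+1) - D L k) / D\<^sup>k\<^sup>+\<^sup>1\<close>.\<close>
lemma bounded_defect_div_power_limit:
  fixes L :: "nat \<Rightarrow> real" and D lo hi :: real
  assumes D: "D > 1"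
    and lo: "\<And>n. lo \<le> L (Suc n) - D * L n" and hi: "\<And>n. L (Suc n) - D * L n \<le> hi"
  obtains l where "(\<lambda>n. L n / D ^ n) \<longlonglongrightarrow> l"
    and "lo / (D - 1) \<le> l - L 0" and "l - L 0 \<le> hi / (D - 1)"
proof -
  define g where "g k = (L (Suc k) - D * L k) / D ^ Suc k" for k
  define h :: "nat \<Rightarrow> real" where "h k = 1 / D ^ Suc k" for k
  have h: "h sums (1 / (D - 1))"
    unfolding h_def by (rule sums_inverse_power_Suc[OF D])
  have h0: "h k \<ge> 0" for k
    using D by (simp add: h_def)
  have g_lo: "lo * h k \<le> g k" and g_hi: "g k \<le> hi * h k" for k
    using divide_right_mono[OF lo[of k], of "D ^ Suc k"] divide_right_mono[OF hi[of k], of "D ^ Suc k"] D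
    by (simp_all add: g_def h_def)
  have bound: "norm (g k) \<le> (\<bar>lo\<bar> + \<bar>hi\<bar>) * h k" for k
  proof -
    have "- (\<bar>lo\<bar> + \<bar>hi\<bar>) * h k \<le> lo * h k" "hi * h k \<le> (\<bar>lo\<bar> + \<bar>hi\<bar>) * h k"
      using h0[of k] by (intro mult_right_mono; simp)+
    then show ?thesis
      unfolding real_norm_def using g_lo[of k] g_hi[of k] by (intro abs_leI; linarith)
  qed
  have "summable (\<lambda>k. (\<bar>lo\<bar> + \<bar>hi\<bar>) * h k)"
    using h by (intro summable_mult) (rule sums_summable)
  then have "summable g" by (rule summable_comparison_test') (rule bound)
  then have g: "g sums suminf g" by (rule summable_sums)
  have telescope: "L n / D ^ n = L 0 + (\<Sum>k<n. g k)" for n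
  proof (induction n)
    case (Suc n)
    have "L (Suc n) / D ^ Suc n = L n / D ^ n + g n"
      using D by (simp add: g_def field_simps)
    then show ?case using Suc by simp
  qed simp
  have "(\<lambda>n. L n / D ^ n) \<longlonglongrightarrow> L 0 + suminf g"
    unfolding telescope using g by (intro tendsto_add tendsto_const) (simp add: sums_def)
  moreover have "lo / (D - 1) \<le> suminf g" "suminf g \<le> hi / (D - 1)"
    using sums_le[OF g_lo sums_mult[OF h, of lo] g] sums_le[OF g_hi g sums_mult[OF h, of hi]]
    by simp_all
  ultimately show ?thesis using that by simp
qed

theorem proposition2p1:
  fixes av :: "'a::field \<Rightarrow> real" and K :: "'a set"
    and \<phi> :: "'a poly" and d :: nat and \<alpha> :: "nat \<Rightarrow> 'a" and x :: 'a
  assumes "is_absolute_value av"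
    and "av_complete av"
    and "alg_closed TYPE('a)"
    and "is_subfield K"
    and "\<forall>i. coeff \<phi> i \<in> K"
    and "degree \<phi> = d" and "d \<ge> 2"
    and "\<forall>z. poly \<phi> z = lead_coeff \<phi> * (\<Prod>i<d. z - \<alpha> i)"
  shows "- real d * ln (small_c av \<phi> \<alpha>) / (real d - 1)
           \<le> canonical_local_height av \<phi> x - local_height av x
       \<and> canonical_local_height av \<phi> x - local_height av x
           \<le> ln (big_C av \<phi>) / (real d - 1)"
proof -
  note av = assms(1) and deg = assms(6) and roots = assms(8)
  define L where "L n = local_height av ((poly \<phi> ^^ n) x)" for n
  have lower: "- real d * ln (small_c av \<phi> \<alpha>) \<le> L (Suc n) - real d * L n" for n
    using local_height_poly_ge[of av \<phi> \<alpha> "(poly \<phi> ^^ n) x"] av deg roots assms(7)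
    by (simp add: L_def)
  have upper: "L (Suc n) - real d * L n \<le> ln (big_C av \<phi>)" for n
    using local_height_poly_le[OF av, of \<phi> "(poly \<phi> ^^ n) x"] deg by (simp add: L_def)
  have d1: "real d > 1" using assms(7) by simp
  obtain l where lim: "(\<lambda>n. L n / real d ^ n) \<longlonglongrightarrow> l"
    and lo: "- real d * ln (small_c av \<phi> \<alpha>) / (real d - 1) \<le> l - L 0"
    and hi: "l - L 0 \<le> ln (big_C av \<phi>) / (real d - 1)"
    by (rule bounded_defect_div_power_limit[where L = L
        and lo = "- real d * ln (small_c av \<phi> \<alpha>)" and hi = "ln (big_C av \<phi>)", OF d1 lower upper])
  have "canonical_local_height av \<phi> x = l"
    using lim unfolding canonical_local_height_def L_def deg by (rule limI)
  moreover have "local_height av x = L 0" by (simp add: L_def)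
  ultimately show ?thesis using lo hi by (simp only:)
qed

end
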